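(* Let $\mathfrak{A}[\tau]$ be a topological partial *-algebra with multiplication core $\mathfrak{B}$, and let $\omega$ be a $\tau$-continuous, $\mathfrak{B}$-positive linear functional on $\mathfrak{A}$. Then the map $\lambda^0_\omega:a\in\mathfrak{B}\mapsto\lambda^0_\omega(a)\in\mathcal{H}_\omega$ is $\tau^*$-closable; that is, whenever $\{a_\delta\}\subset\mathfrak{B}$ is a net with $a_\delta\to0$ in $\tau^*$ and $\{\lambda^0_\omega(a_\delta)\}$ is a Cauchy net in $\mathcal{H}_\omega$, then $\lambda^0_\omega(a_\delta)\to0$.
   Context: A partial *-algebra is a complex vector space $\mathfrak{A}$ with conjugate-linear involution and distributive partial multiplication on $\Gamma\subset\mathfrak{A}\times\mathfrak{A}$ with $(x,y)\in\Gamma$ iff $(y^*,x^* )\in\Gamma$, then $(xy)^*=y^*x^*$; $R(x)=\{y:(x,y)\in\Gamma\}$; $R\mathfrak{A}$ is the set of universal right multipliers. A topological partial *-algebra: Hausdorff locally convex topology $\tau$ such that each map $y\in R(x)\mapsto xy$ is closed (if $y_\alpha\in R(x)$, $y_\alpha\to y$, $xy_\alpha\to z$, then $y\in R(x)$, $z=xy$). $\tau^*$ is the topology given by the seminorms $\max\{p(x),p(x^* )\}$, $p$ a $\tau$-continuous seminorm. A multiplication core is a subspace $\mathfrak{B}\subseteq R\mathfrak{A}$ with: $e\in\mathfrak{B}$ if $\mathfrak{A}$ has a unit $e$; $\mathfrak{B}\mathfrak{B}\subseteq\mathfrak{B}$; $\mathfrak{B}$ $\tau^*$-dense in $\mathfrak{A}$;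 $x\mapsto xb$ $\tau$-continuous for $b\in\mathfrak{B}$; $b^*(xc)=(b^*x)c$ for $x\in\mathfrak{A}$, $b,c\in\mathfrak{B}$. A linear functional $\omega$ is $\mathfrak{B}$-positive if $\omega(a^*a)\ge0$ for all $a\in\mathfrak{B}$. Then $N_\omega=\{x\in\mathfrak{B}:\omega(y^*x)=0\ \forall y\in\mathfrak{B}\}$, $\lambda^0_\omega(x)=x+N_\omega$ ($x\in\mathfrak{B}$), and $\mathcal{H}_\omega$ is the Hilbert space completion of $\mathfrak{B}/N_\omega$ with inner product $\langle\lambda^0_\omega(x),\lambda^0_\omega(y)\rangle=\omega(y^*x)$. *)

theory Defs
  imports "HOL-Analysis.Analysis"
begin

text \<open>The involution is invl, the partial multiplication is mul, which is only
meaningful on the set Gam of composable pairs.\<close>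

definition partial_star_algebra ::
  "(complex \<Rightarrow> 'a::ab_group_add \<Rightarrow> 'a) \<Rightarrow> ('a \<Rightarrow> 'a) \<Rightarrow> ('a \<times> 'a) set \<Rightarrow> ('a \<Rightarrow> 'a \<Rightarrow> 'a) \<Rightarrow> bool"
  where "partial_star_algebra sc invl Gam mul \<longleftrightarrow>
     vector_space sc \<and>
     (\<forall>x y. invl (x + y) = invl x + invl y) \<and>
     (\<forall>c x. invl (sc c x) = sc (cnj c) (invl x)) \<and>
     (\<forall>x. invl (invl x) = x) \<and>
     (\<forall>x y. (x, y) \<in> Gam \<longleftrightarrow> (invl y, invl x) \<in> Gam) \<and>
     (\<forall>x y. (x, y) \<in> Gam \<longrightarrow> invl (mul x y) = mul (invl y) (invl x)) \<and>
     (\<forall>x y z c d. (x, y) \<in> Gam \<and> (x, z) \<in> Gam \<longrightarrow>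
        (x, sc c y + sc d z) \<in> Gam \<and> mul x (sc c y + sc d z) = sc c (mul x y) + sc d (mul x z)) \<and>
     (\<forall>x y z c d. (y, x) \<in> Gam \<and> (z, x) \<in> Gam \<longrightarrow>
        (sc c y + sc d z, x) \<in> Gam \<and> mul (sc c y + sc d z) x = sc c (mul y x) + sc d (mul z x))"

definition right_mult :: "('a \<times> 'a) set \<Rightarrow> 'a \<Rightarrow> 'a set"
  where "right_mult Gam x = {y. (x, y) \<in> Gam}"

definition univ_right_mult :: "('a \<times> 'a) set \<Rightarrow> 'a set"
  where "univ_right_mult Gam = {y. \<forall>x. (x, y) \<in> Gam}"

definition is_unit :: "('a \<times> 'a) set \<Rightarrow> ('a \<Rightarrow> 'a \<Rightarrow> 'a) \<Rightarrow> 'a \<Rightarrow> bool"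
  where "is_unit Gam mul e \<longleftrightarrow>
     (\<forall>x. (x, e) \<in> Gam \<and> (e, x) \<in> Gam \<and> mul x e = x \<and> mul e x = x)"

definition seminorm_on :: "(complex \<Rightarrow> 'a::ab_group_add \<Rightarrow> 'a) \<Rightarrow> ('a \<Rightarrow> real) \<Rightarrow> bool"
  where "seminorm_on sc p \<longleftrightarrow>
     (\<forall>x y. p (x + y) \<le> p x + p y) \<and> (\<forall>c x. p (sc c x) = norm c * p x)"

definition seminorm_topology :: "('a::ab_group_add \<Rightarrow> real) set \<Rightarrow> 'a topology"
  where "seminorm_topology P = topology (\<lambda>U. \<forall>x\<in>U. \<exists>Q e. finite Q \<and> Q \<subseteq> P \<and> e > 0 \<and>
            {y. \<forall>q\<in>Q. q (y - x) < e} \<subseteq> U)"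

definition locally_convex_topology :: "(complex \<Rightarrow> 'a::ab_group_add \<Rightarrow> 'a) \<Rightarrow> 'a topology \<Rightarrow> bool"
  where "locally_convex_topology sc T \<longleftrightarrow>
     (\<exists>P. (\<forall>p\<in>P. seminorm_on sc p) \<and> T = seminorm_topology P) \<and> Hausdorff_space T"

definition topological_partial_star_algebra ::
  "(complex \<Rightarrow> 'a::ab_group_add \<Rightarrow> 'a) \<Rightarrow> ('a \<Rightarrow> 'a) \<Rightarrow> ('a \<times> 'a) set \<Rightarrow> ('a \<Rightarrow> 'a \<Rightarrow> 'a)
     \<Rightarrow> 'a topology \<Rightarrow> bool"
  where "topological_partial_star_algebra sc invl Gam mul T \<longleftrightarrow>
     partial_star_algebra sc invl Gam mul \<and> locally_convex_topology sc T \<and>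
     (\<forall>x. closedin (prod_topology T T) {(y, mul x y) | y. y \<in> right_mult Gam x})"

definition tau_star :: "(complex \<Rightarrow> 'a::ab_group_add \<Rightarrow> 'a) \<Rightarrow> ('a \<Rightarrow> 'a) \<Rightarrow> 'a topology \<Rightarrow> 'a topology"
  where "tau_star sc invl T = seminorm_topology
     {(\<lambda>x. max (p x) (p (invl x))) | p. seminorm_on sc p \<and> continuous_map T euclideanreal p}"

definition multiplication_core ::
  "(complex \<Rightarrow> 'a::ab_group_add \<Rightarrow> 'a) \<Rightarrow> ('a \<Rightarrow> 'a) \<Rightarrow> ('a \<times> 'a) set \<Rightarrow> ('a \<Rightarrow> 'a \<Rightarrow> 'a)
     \<Rightarrow> 'a topology \<Rightarrow> 'a set \<Rightarrow> bool"
  where "multiplication_core sc invl Gam mul T B \<longleftrightarrow>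
     B \<subseteq> univ_right_mult Gam \<and>
     0 \<in> B \<and> (\<forall>x\<in>B. \<forall>y\<in>B. x + y \<in> B) \<and> (\<forall>c. \<forall>x\<in>B. sc c x \<in> B) \<and>
     (\<forall>e. is_unit Gam mul e \<longrightarrow> e \<in> B) \<and>
     (\<forall>b\<in>B. \<forall>c\<in>B. mul b c \<in> B) \<and>
     (tau_star sc invl T) closure_of B = UNIV \<and>
     (\<forall>b\<in>B. continuous_map T T (\<lambda>x. mul x b)) \<and>
     (\<forall>x. \<forall>b\<in>B. \<forall>c\<in>B. mul (invl b) (mul x c) = mul (mul (invl b) x) c)"

definition complex_linear_functional :: "(complex \<Rightarrow> 'a::ab_group_add \<Rightarrow> 'a) \<Rightarrow> ('a \<Rightarrow> complex) \<Rightarrow> bool"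
  where "complex_linear_functional sc \<omega> \<longleftrightarrow>
     (\<forall>x y. \<omega> (x + y) = \<omega> x + \<omega> y) \<and> (\<forall>c x. \<omega> (sc c x) = c * \<omega> x)"

definition B_positive :: "('a \<Rightarrow> 'a) \<Rightarrow> ('a \<Rightarrow> 'a \<Rightarrow> 'a) \<Rightarrow> 'a set \<Rightarrow> ('a \<Rightarrow> complex) \<Rightarrow> bool"
  where "B_positive invl mul B \<omega> \<longleftrightarrow>
     (\<forall>a\<in>B. Im (\<omega> (mul (invl a) a)) = 0 \<and> Re (\<omega> (mul (invl a) a)) \<ge> 0)"

text \<open>Norm in H_omega of lambda^0_omega(x), x \<in> B:
  ||lambda^0(x)||^2 = <lambda^0(x), lambda^0(x)> = omega(x^* x).\<close>
definition lambda0_norm :: "('a \<Rightarrow> 'a) \<Rightarrow> ('a \<Rightarrow> 'a \<Rightarrow> 'a) \<Rightarrow> ('a \<Rightarrow> complex) \<Rightarrow> 'a \<Rightarrow> real"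
  where "lambda0_norm invl mul \<omega> x = sqrt (Re (\<omega> (mul (invl x) x)))"

end

theory Submission
  imports Defs
begin

text \<open>If \<open>a\<^sub>i \<rightarrow> 0\<close> in \<open>\<tau>\<^sup>*\<close>, then \<open>a\<^sub>i\<^sup>* \<rightarrow> 0\<close> in \<open>\<tau>\<close>; since right multiplication by
  \<open>b \<in> \<BB>\<close> and \<open>\<omega>\<close> are continuous, \<open>\<omega>(a\<^sub>i\<^sup>* b) \<rightarrow> 0\<close> for every \<open>b \<in> \<BB>\<close>.
  Expanding \<open>\<omega>((a\<^sub>i - a\<^sub>j)\<^sup>*(a\<^sub>i - a\<^sub>j))\<close> and using positivity gives
  \<open>\<parallel>\<lambda>(a\<^sub>i)\<parallel>\<^sup>2 \<le> \<parallel>\<lambda>(a\<^sub>i - a\<^sub>j)\<parallel>\<^sup>2 + 2 Re \<omega>(a\<^sub>j\<^sup>* a\<^sub>i)\<close>. For fixed \<open>i\<close> far out,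
  choosing \<open>j\<close> far out makes the first term small by the Cauchy condition and the
  second small by the weak convergence just established.\<close>

lemma istopology_seminorm_neighbourhoods:
  fixes P :: "('a::ab_group_add \<Rightarrow> real) set"
  shows "istopology (\<lambda>U. \<forall>x\<in>U. \<exists>Q e. finite Q \<and> Q \<subseteq> P \<and> e > 0 \<and>
            {y. \<forall>q\<in>Q. q (y - x) < e} \<subseteq> U)"
  unfolding istopology_def
proof (intro conjI allI impI ballI)
  fix S U x
  assume S: "\<forall>x\<in>S. \<exists>Q e. finite Q \<and> Q \<subseteq> P \<and> e > 0 \<and> {y. \<forall>q\<in>Q. q (y - x) < e} \<subseteq> S"
    and U: "\<forall>x\<in>U. \<exists>Q e. finite Q \<and> Q \<subseteq> P \<and> e > 0 \<and> {y. \<forall>q\<in>Q. q (y - x) < e} \<subseteq> U"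
    and x: "x \<in> S \<inter> U"
  obtain Q1 e1 where Q1: "finite Q1" "Q1 \<subseteq> P" "e1 > 0" "{y. \<forall>q\<in>Q1. q (y - x) < e1} \<subseteq> S"
    using bspec[OF S IntD1[OF x]] by blast
  obtain Q2 e2 where Q2: "finite Q2" "Q2 \<subseteq> P" "e2 > 0" "{y. \<forall>q\<in>Q2. q (y - x) < e2} \<subseteq> U"
    using bspec[OF U IntD2[OF x]] by blast
  have "{y. \<forall>q\<in>Q1 \<union> Q2. q (y - x) < min e1 e2} \<subseteq> S \<inter> U"
    using Q1(4) Q2(4) by force
  then show "\<exists>Q e. finite Q \<and> Q \<subseteq> P \<and> e > 0 \<and> {y. \<forall>q\<in>Q. q (y - x) < e} \<subseteq> S \<inter> U"
    using Q1 Q2 by (intro exI[of _ "Q1 \<union> Q2"] exI[of _ "min e1 e2"]) simp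
next
  fix K x
  assume K: "\<forall>U\<in>K. \<forall>x\<in>U. \<exists>Q e. finite Q \<and> Q \<subseteq> P \<and> e > 0 \<and> {y. \<forall>q\<in>Q. q (y - x) < e} \<subseteq> U"
    and "x \<in> \<Union>K"
  then obtain U where U: "U \<in> K" "x \<in> U"
    by blast
  obtain Q e where Q: "finite Q" "Q \<subseteq> P" "e > 0" "{y. \<forall>q\<in>Q. q (y - x) < e} \<subseteq> U"
    using bspec[OF bspec[OF K U(1)] U(2)] by blast
  have "{y. \<forall>q\<in>Q. q (y - x) < e} \<subseteq> \<Union>K"
    using Q(4) Union_upper[OF \<open>U \<in> K\<close>] by (rule order_trans)
  with Q(1-3) show "\<exists>Q e. finite Q \<and> Q \<subseteq> P \<and> e > 0 \<and> {y. \<forall>q\<in>Q. q (y - x) < e} \<subseteq> \<Union>K"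
    by (intro exI[of _ Q] exI[of _ e]) simp
qed

lemma openin_seminorm_topology:
  "openin (seminorm_topology P) U \<longleftrightarrow>
     (\<forall>x\<in>U. \<exists>Q e. finite Q \<and> Q \<subseteq> P \<and> e > 0 \<and> {y. \<forall>q\<in>Q. q (y - x) < e} \<subseteq> U)"
  unfolding seminorm_topology_def topology_inverse'[OF istopology_seminorm_neighbourhoods] ..

lemma topspace_seminorm_topology [simp]: "topspace (seminorm_topology P) = UNIV"
proof -
  have "openin (seminorm_topology P) UNIV"
    unfolding openin_seminorm_topology by (intro ballI exI[of _ "{}"] exI[of _ "1::real"]) simp
  then show ?thesis
    using openin_subset by blast
qed

lemma openin_seminorm_topology_sublevel:
  assumes "q \<in> P" and "\<forall>x y. q (x + y) \<le> q x + q y"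
  shows "openin (seminorm_topology P) {y. q y < e}"
  unfolding openin_seminorm_topology
proof
  fix x assume x: "x \<in> {y. q y < e}"
  have "q y \<le> q (y - x) + q x" for y
    using assms(2) by (metis diff_add_cancel)
  then have "{y. \<forall>p\<in>{q}. p (y - x) < e - q x} \<subseteq> {y. q y < e}"
    by (smt (verit) mem_Collect_eq singletonI subsetI)
  then show "\<exists>Q e'. finite Q \<and> Q \<subseteq> P \<and> e' > 0 \<and> {y. \<forall>q\<in>Q. q (y - x) < e'} \<subseteq> {y. q y < e}"
    using x assms(1) by (intro exI[of _ "{q}"] exI[of _ "e - q x"]) simp
qed

lemma limitin_seminorm_topology_0_iff:
  assumes "\<forall>q\<in>P. (\<forall>x y. q (x + y) \<le> q x + q y) \<and> q 0 = 0"
  shows "limitin (seminorm_topology P) f 0 F \<longleftrightarrow> (\<forall>q\<in>P. \<forall>e>0. \<forall>\<^sub>F i in F. q (f i) < e)"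
proof
  assume lim: "limitin (seminorm_topology P) f 0 F"
  show "\<forall>q\<in>P. \<forall>e>0. \<forall>\<^sub>F i in F. q (f i) < e"
  proof (intro ballI allI impI)
    fix q and e :: real assume "q \<in> P" "e > 0"
    then have "openin (seminorm_topology P) {y. q y < e}" "0 \<in> {y. q y < e}"
      using assms openin_seminorm_topology_sublevel[of q P] by auto
    with lim have "\<forall>\<^sub>F i in F. f i \<in> {y. q y < e}"
      unfolding limitin_def by (elim conjE allE impE) (rule conjI)
    then show "\<forall>\<^sub>F i in F. q (f i) < e"
      by simp
  qed
next
  assume small: "\<forall>q\<in>P. \<forall>e>0. \<forall>\<^sub>F i in F. q (f i) < e"
  show "limitin (seminorm_topology P) f 0 F"
    unfolding limitin_def
  proof (intro conjI allI impI)
    fix U assume "openin (seminorm_topology P) U \<and> 0 \<in> U"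
    then obtain Q e where Q: "finite Q" "Q \<subseteq> P" "e > 0" "{y. \<forall>q\<in>Q. q y < e} \<subseteq> U"
      unfolding openin_seminorm_topology by fastforce
    have "\<forall>\<^sub>F i in F. \<forall>q\<in>Q. q (f i) < e"
      using Q small by (intro eventually_ball_finite) blast+
    then show "\<forall>\<^sub>F i in F. f i \<in> U"
      by eventually_elim (use Q(4) in blast)
  qed simp
qed

lemma continuous_map_seminorm_topology:
  assumes "q \<in> P" and "\<forall>x y. q (x + y) \<le> q x + q y" and "\<forall>x. q (- x) = q x"
  shows "continuous_map (seminorm_topology P) euclideanreal q"
  unfolding continuous_map_def
proof (intro conjI allI impI; simp)
  fix V :: "real set" assume "open V"
  show "openin (seminorm_topology P) {x. q x \<in> V}"
    unfolding openin_seminorm_topology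
  proof
    fix x assume "x \<in> {x. q x \<in> V}"
    then obtain r where r: "r > 0" "ball (q x) r \<subseteq> V"
      using \<open>open V\<close> open_contains_ball by blast
    have "\<bar>q y - q x\<bar> \<le> q (y - x)" for y
      using assms(2) spec[OF assms(3), of "y - x"]
      by (smt (verit, best) add.commute diff_add_cancel minus_diff_eq)
    then have "{y. \<forall>p\<in>{q}. p (y - x) < r} \<subseteq> {x. q x \<in> V}"
      using r(2) by (smt (verit) dist_real_def mem_ball mem_Collect_eq singletonI subset_iff)
    then show "\<exists>Q e. finite Q \<and> Q \<subseteq> P \<and> e > 0 \<and> {y. \<forall>q\<in>Q. q (y - x) < e} \<subseteq> {x. q x \<in> V}"
      using r(1) assms(1) by (intro exI[of _ "{q}"] exI[of _ r]) simp
  qed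
qed

lemma seminorm_on_0:
  assumes "module sc" and "seminorm_on sc p"
  shows "p 0 = 0"
proof -
  interpret module sc
    by fact
  have "p (sc 0 0) = norm (0::complex) * p 0"
    using assms(2) unfolding seminorm_on_def by blast
  then show ?thesis
    by simp
qed

lemma seminorm_on_minus:
  assumes "module sc" and "seminorm_on sc p"
  shows "p (- x) = p x"
proof -
  interpret module sc
    by fact
  have "p (sc (- 1) x) = norm (- 1::complex) * p x"
    using assms(2) unfolding seminorm_on_def by blast
  then show ?thesis
    by simp
qed

lemma seminorm_on_triangle:
  "seminorm_on sc p \<Longrightarrow> p (x + y) \<le> p x + p y"
  unfolding seminorm_on_def by blast

lemma limitin_tau_star_imp_limitin_invl:
  assumes module: "module sc" and invl_add: "\<forall>x y. invl (x + y) = invl x + invl y"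
    and lct: "locally_convex_topology sc T"
    and lim: "limitin (tau_star sc invl T) a 0 F"
  shows "limitin T (\<lambda>i. invl (a i)) 0 F"
proof -
  obtain P where P: "\<forall>p\<in>P. seminorm_on sc p" and T: "T = seminorm_topology P"
    using lct unfolding locally_convex_topology_def by blast
  have invl_0: "invl 0 = 0"
    using invl_add[rule_format, of 0 0] by simp
  have seminorm_facts: "(\<forall>x y. p (x + y) \<le> p x + p y) \<and> p 0 = 0" if "seminorm_on sc p" for p
    using that module seminorm_on_triangle seminorm_on_0 by blast
  \<comment> \<open>\<open>max p (p \<circ> invl)\<close> is a \<open>\<tau>\<^sup>*\<close>-seminorm for every seminorm \<open>p\<close> defining \<open>\<tau>\<close>,
    and it dominates \<open>p \<circ> invl\<close>.\<close>
  let ?Pstar = "{(\<lambda>x. max (p x) (p (invl x))) | p. seminorm_on sc p \<and> continuous_map T euclideanreal p}"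
  have "\<forall>q\<in>?Pstar. (\<forall>x y. q (x + y) \<le> q x + q y) \<and> q 0 = 0"
  proof safe
    fix p x y assume "seminorm_on sc p"
    then have "p (x + y) \<le> p x + p y" "p (invl (x + y)) \<le> p (invl x) + p (invl y)" "p 0 = 0"
      using seminorm_facts invl_add by simp_all
    then show "max (p (x + y)) (p (invl (x + y))) \<le> max (p x) (p (invl x)) + max (p y) (p (invl y))"
      "max (p 0) (p (invl 0)) = 0"
      using invl_0 by (auto simp: max_def)
  qed
  from limitin_seminorm_topology_0_iff[OF this] lim
  have small: "\<forall>q\<in>?Pstar. \<forall>e>0. \<forall>\<^sub>F i in F. q (a i) < e"
    unfolding tau_star_def by (rule iffD1)
  have small_invl: "\<forall>p\<in>P. \<forall>e>0. \<forall>\<^sub>F i in F. p (invl (a i)) < e"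
  proof (intro ballI allI impI)
    fix p and e :: real assume that: "p \<in> P" "e > 0"
    have p: "seminorm_on sc p"
      using that P by blast
    then have "continuous_map T euclideanreal p"
      unfolding T using that seminorm_on_triangle seminorm_on_minus[OF module]
      by (intro continuous_map_seminorm_topology) auto
    with p have "(\<lambda>x. max (p x) (p (invl x))) \<in> ?Pstar"
      by auto
    with small have "\<forall>e>0. \<forall>\<^sub>F i in F. max (p (a i)) (p (invl (a i))) < e"
      by (rule bspec)
    then have "\<forall>\<^sub>F i in F. max (p (a i)) (p (invl (a i))) < e"
      using \<open>e > 0\<close> by blast
    then show "\<forall>\<^sub>F i in F. p (invl (a i)) < e"
      by eventually_elim simp
  qed
  have "\<forall>q\<in>P. (\<forall>x y. q (x + y) \<le> q x + q y) \<and> q 0 = 0"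
    using P seminorm_facts by blast
  from limitin_seminorm_topology_0_iff[OF this] small_invl show ?thesis
    unfolding T by (rule iffD2)
qed

lemma partial_star_algebra_module:
  "partial_star_algebra sc invl Gam mul \<Longrightarrow> module sc"
  unfolding partial_star_algebra_def module_iff_vector_space by blast

lemma partial_star_algebra_mul_0_left:
  assumes "partial_star_algebra sc invl Gam mul" and "(0, b) \<in> Gam"
  shows "mul 0 b = 0"
proof -
  interpret module sc
    using assms(1) by (rule partial_star_algebra_module)
  have "mul (sc 0 0 + sc 0 0) b = sc 0 (mul 0 b) + sc 0 (mul 0 b)"
    using assms unfolding partial_star_algebra_def by blast
  then show ?thesis
    by simp
qed

lemma tendsto_functional_mul_right:
  assumes "partial_star_algebra sc invl Gam mul" and "complex_linear_functional sc \<omega>"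
    and "continuous_map T euclidean \<omega>"
    and "b \<in> univ_right_mult Gam" and "continuous_map T T (\<lambda>x. mul x b)"
    and "limitin T f 0 F"
  shows "((\<lambda>i. \<omega> (mul (f i) b)) \<longlongrightarrow> 0) F"
proof -
  have "mul 0 b = 0"
    using assms(1,4) partial_star_algebra_mul_0_left unfolding univ_right_mult_def by blast
  moreover have "\<omega> (0 + 0) = \<omega> 0 + \<omega> 0"
    using assms(2) unfolding complex_linear_functional_def by blast
  ultimately have "\<omega> (mul 0 b) = 0"
    by simp
  moreover have "limitin euclidean (\<lambda>i. \<omega> (mul (f i) b)) (\<omega> (mul 0 b)) F"
    using continuous_map_limit[OF continuous_map_compose[OF assms(5,3)] assms(6)] by (simp add: o_def)
  ultimately show ?thesis
    by simp
qed

lemma multiplication_core_subspace: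
  "module sc \<Longrightarrow> multiplication_core sc invl Gam mul T B \<Longrightarrow> module.subspace sc B"
  unfolding multiplication_core_def module.subspace_def by blast

lemma functional_star_square_add_scale:
  assumes "partial_star_algebra sc invl Gam mul" and "complex_linear_functional sc \<omega>"
    and "x \<in> univ_right_mult Gam" and "y \<in> univ_right_mult Gam"
  shows "\<omega> (mul (invl (x + sc c y)) (x + sc c y)) = \<omega> (mul (invl x) x) + c * \<omega> (mul (invl x) y)
     + cnj c * \<omega> (mul (invl y) x) + cnj c * c * \<omega> (mul (invl y) y)"
proof -
  interpret module sc
    using assms(1) by (rule partial_star_algebra_module)
  have invl: "invl (x + sc c y) = invl x + sc (cnj c) (invl y)"
    using assms(1) unfolding partial_star_algebra_def by simp
  have right_distrib: "\<And>x y z c d. (x, y) \<in> Gam \<Longrightarrow> (x, z) \<in> Gam \<Longrightarrow>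
      mul x (sc c y + sc d z) = sc c (mul x y) + sc d (mul x z)"
    and left_distrib: "\<And>x y z c d. (y, x) \<in> Gam \<Longrightarrow> (z, x) \<in> Gam \<Longrightarrow>
      mul (sc c y + sc d z) x = sc c (mul y x) + sc d (mul z x)"
    using assms(1) unfolding partial_star_algebra_def by blast+
  have Gam: "\<And>z. (z, x) \<in> Gam" "\<And>z. (z, y) \<in> Gam"
    using assms(3,4) unfolding univ_right_mult_def by auto
  have \<omega>: "\<And>u v. \<omega> (u + v) = \<omega> u + \<omega> v" "\<And>c u. \<omega> (sc c u) = c * \<omega> u"
    using assms(2) unfolding complex_linear_functional_def by blast+
  define z where "z = invl x + sc (cnj c) (invl y)"
  have "mul z (x + sc c y) = mul z x + sc c (mul z y)"
    using right_distrib[of z x y 1 c] Gam by simp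
  moreover have "mul z x = mul (invl x) x + sc (cnj c) (mul (invl y) x)"
    and "mul z y = mul (invl x) y + sc (cnj c) (mul (invl y) y)"
    using left_distrib[of "invl x" _ "invl y" 1 "cnj c"] Gam unfolding z_def by simp_all
  ultimately show ?thesis
    unfolding invl z_def[symmetric] by (simp add: \<omega> algebra_simps)
qed

lemma B_positive_Re_symmetric:
  assumes "partial_star_algebra sc invl Gam mul" and "complex_linear_functional sc \<omega>"
    and "module.subspace sc B" and "B \<subseteq> univ_right_mult Gam" and "B_positive invl mul B \<omega>"
    and "x \<in> B" and "y \<in> B"
  shows "Re (\<omega> (mul (invl x) y)) = Re (\<omega> (mul (invl y) x))"
proof -
  interpret module sc
    using assms(1) by (rule partial_star_algebra_module)
  have "x + sc \<i> y \<in> B"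
    using assms(3,6,7) by (simp add: subspace_add subspace_scale)
  then have "Im (\<omega> (mul (invl (x + sc \<i> y)) (x + sc \<i> y))) = 0"
    using assms(5) unfolding B_positive_def by blast
  moreover have "Im (\<omega> (mul (invl x) x)) = 0" "Im (\<omega> (mul (invl y) y)) = 0"
    using assms(5-7) unfolding B_positive_def by blast+
  ultimately show ?thesis
    using assms(4,6,7) by (simp add: functional_star_square_add_scale[OF assms(1,2)] subset_iff)
qed

lemma lambda0_norm_square:
  assumes "B_positive invl mul B \<omega>" and "x \<in> B"
  shows "lambda0_norm invl mul \<omega> x \<ge> 0" and "(lambda0_norm invl mul \<omega> x)\<^sup>2 = Re (\<omega> (mul (invl x) x))"
  using assms unfolding B_positive_def lambda0_norm_def by simp_all

lemma lambda0_norm_square_le: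
  assumes "partial_star_algebra sc invl Gam mul" and "complex_linear_functional sc \<omega>"
    and "module.subspace sc B" and "B \<subseteq> univ_right_mult Gam" and "B_positive invl mul B \<omega>"
    and "x \<in> B" and "y \<in> B"
  shows "(lambda0_norm invl mul \<omega> x)\<^sup>2
           \<le> (lambda0_norm invl mul \<omega> (x - y))\<^sup>2 + 2 * Re (\<omega> (mul (invl y) x))"
proof -
  interpret module sc
    using assms(1) by (rule partial_star_algebra_module)
  have diff: "x - y = x + sc (- 1) y"
    by simp
  have "x - y \<in> B"
    using assms(3,6,7) by (rule subspace_diff)
  have "x \<in> univ_right_mult Gam" "y \<in> univ_right_mult Gam"
    using assms(4,6,7) by blast+
  then have "\<omega> (mul (invl (x - y)) (x - y)) = \<omega> (mul (invl x) x) + (- 1) * \<omega> (mul (invl x) y)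
      + cnj (- 1) * \<omega> (mul (invl y) x) + cnj (- 1) * (- 1) * \<omega> (mul (invl y) y)"
    unfolding diff by (rule functional_star_square_add_scale[OF assms(1,2)])
  then have "Re (\<omega> (mul (invl (x - y)) (x - y)))
      = Re (\<omega> (mul (invl x) x)) - 2 * Re (\<omega> (mul (invl y) x)) + Re (\<omega> (mul (invl y) y))"
    using B_positive_Re_symmetric[OF assms(1-7)] by simp
  then have "(lambda0_norm invl mul \<omega> (x - y))\<^sup>2
      = (lambda0_norm invl mul \<omega> x)\<^sup>2 - 2 * Re (\<omega> (mul (invl y) x)) + (lambda0_norm invl mul \<omega> y)\<^sup>2"
    using lambda0_norm_square(2)[OF assms(5)] \<open>x - y \<in> B\<close> assms(6,7) by simp
  then show ?thesis
    using lambda0_norm_square(1)[OF assms(5,7)] by (smt (verit) zero_le_power2)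
qed

lemma tendsto_0_of_Cauchy_square_bound:
  fixes N :: "'i \<Rightarrow> real" and D S :: "'i \<Rightarrow> 'i \<Rightarrow> real"
  assumes N_nonneg: "\<And>i. N i \<ge> 0" and D_nonneg: "\<And>i j. D i j \<ge> 0"
    and bound: "\<And>i j. (N i)\<^sup>2 \<le> (D i j)\<^sup>2 + S i j"
    and Cauchy: "\<forall>e>0. \<forall>\<^sub>F (i, j) in F \<times>\<^sub>F F. D i j < e"
    and S_tendsto: "\<And>i. (S i \<longlongrightarrow> 0) F"
  shows "(N \<longlongrightarrow> 0) F"
proof (cases "F = bot")
  case False
  show ?thesis
  proof (rule order_tendstoI)
    fix e :: real assume "e > 0"
    then obtain Pi Pj where "eventually Pi F" "eventually Pj F"
      and D_small: "\<And>i j. Pi i \<Longrightarrow> Pj j \<Longrightarrow> D i j < e / 2"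
      using Cauchy[rule_format, of "e / 2"] unfolding eventually_prod_filter by auto
    show "\<forall>\<^sub>F i in F. N i < e"
      using \<open>eventually Pi F\<close>
    proof eventually_elim
      case (elim i)
      have "\<forall>\<^sub>F j in F. Pj j \<and> S i j < e\<^sup>2 / 2"
        using \<open>eventually Pj F\<close> order_tendstoD(2)[OF S_tendsto, of "e\<^sup>2 / 2"] \<open>e > 0\<close>
        by (simp add: eventually_conj_iff)
      then obtain j where "Pj j" "S i j < e\<^sup>2 / 2"
        using eventually_happens'[OF False] by blast
      moreover have "(D i j)\<^sup>2 < (e / 2)\<^sup>2"
        using D_small[OF elim \<open>Pj j\<close>] D_nonneg by (rule power_strict_mono) simp_all
      moreover have "(e / 2)\<^sup>2 = e\<^sup>2 / 4" "e\<^sup>2 > 0"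
        using \<open>e > 0\<close> by (simp_all add: power_divide)
      ultimately have "(N i)\<^sup>2 < e\<^sup>2"
        using bound[of i j] by linarith
      then show "N i < e"
        using N_nonneg \<open>e > 0\<close> by (simp add: power_less_imp_less_base)
    qed
  qed (auto intro!: always_eventually less_le_trans[OF _ N_nonneg])
qed simp

theorem proposition4p9:
  fixes sc :: "complex \<Rightarrow> 'a::ab_group_add \<Rightarrow> 'a"
    and invl :: "'a \<Rightarrow> 'a"
    and Gam :: "('a \<times> 'a) set"
    and mul :: "'a \<Rightarrow> 'a \<Rightarrow> 'a"
    and T :: "'a topology"
    and B :: "'a set"
    and \<omega> :: "'a \<Rightarrow> complex"
    and a :: "'i \<Rightarrow> 'a"
    and F :: "'i filter"
  assumes "topological_partial_star_algebra sc invl Gam mul T"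
    and "multiplication_core sc invl Gam mul T B"
    and "complex_linear_functional sc \<omega>"
    and "continuous_map T euclidean \<omega>"
    and "B_positive invl mul B \<omega>"
    and "\<forall>i. a i \<in> B"
    and "limitin (tau_star sc invl T) a 0 F"
    and "\<forall>e>0. \<forall>\<^sub>F (i, j) in F \<times>\<^sub>F F. lambda0_norm invl mul \<omega> (a i - a j) < e"
  shows "((\<lambda>i. lambda0_norm invl mul \<omega> (a i)) \<longlongrightarrow> 0) F"
proof -
  have psa: "partial_star_algebra sc invl Gam mul" and lct: "locally_convex_topology sc T"
    using assms(1) unfolding topological_partial_star_algebra_def by blast+
  have module: "module sc"
    using psa by (rule partial_star_algebra_module)
  have B: "module.subspace sc B" "B \<subseteq> univ_right_mult Gam"
    and mul_right_cont: "\<forall>b\<in>B. continuous_map T T (\<lambda>x. mul x b)"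
    using multiplication_core_subspace[OF module assms(2)] assms(2)
    unfolding multiplication_core_def by blast+
  have "\<forall>x y. invl (x + y) = invl x + invl y"
    using psa unfolding partial_star_algebra_def by blast
  from limitin_tau_star_imp_limitin_invl[OF module this lct assms(7)]
  have invl_lim: "limitin T (\<lambda>i. invl (a i)) 0 F" .
  have "a i \<in> univ_right_mult Gam" "continuous_map T T (\<lambda>x. mul x (a i))" for i
    using assms(6) B(2) mul_right_cont by blast+
  then have "((\<lambda>j. \<omega> (mul (invl (a j)) (a i))) \<longlongrightarrow> 0) F" for i
    by (rule tendsto_functional_mul_right[OF psa assms(3,4) _ _ invl_lim])
  then have S_tendsto: "((\<lambda>j. 2 * Re (\<omega> (mul (invl (a j)) (a i)))) \<longlongrightarrow> 0) F" for i
    by (intro tendsto_mult_right_zero tendsto_Re[of _ 0, simplified])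
  have diff_in_B: "a i - a j \<in> B" for i j
    using assms(6) module.subspace_diff[OF module B(1)] by blast
  show ?thesis
  proof (rule tendsto_0_of_Cauchy_square_bound[where D = "\<lambda>i j. lambda0_norm invl mul \<omega> (a i - a j)"])
    show "lambda0_norm invl mul \<omega> (a i) \<ge> 0" "lambda0_norm invl mul \<omega> (a i - a j) \<ge> 0" for i j
      using lambda0_norm_square(1)[OF assms(5)] assms(6) diff_in_B by blast+
    show "(lambda0_norm invl mul \<omega> (a i))\<^sup>2
        \<le> (lambda0_norm invl mul \<omega> (a i - a j))\<^sup>2 + 2 * Re (\<omega> (mul (invl (a j)) (a i)))" for i j
      using lambda0_norm_square_le[OF psa assms(3) B assms(5)] assms(6) by blast
  qed (use assms(8) S_tendsto in auto)
qed

end
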